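(* Let $p\ge 2$, and let $v,s\in\mathbb{R}^n$ satisfy $v^Ts\ne 0$. Then the linear map $\phi:\mathbb{R}^{\otimes^{p-1} n}_{\mathrm{sym}}\to\mathbb{R}^{\otimes^{p-1} n}_{\mathrm{sym}}$, $\phi(\mathcal{A}) = P_{\mathrm{sym}}(\mathcal{A}\otimes v)[s]$, is bijective. Consequently, for fixed such $v$, the set $\{P_{\mathrm{sym}}(\mathcal{A}\otimes v):\mathcal{A}\in\mathbb{R}^{\otimes^{p-1} n}_{\mathrm{sym}}\}$ has the same dimension as $\mathbb{R}^{\otimes^{p-1} n}_{\mathrm{sym}}$.
   Context: A $p$-tensor $\mathcal{T} \in \mathbb{R}^{\otimes^p n}$ is a multilinear map $(\mathbb{R}^n)^p \to \mathbb{R}$; $\mathcal{T}[s]$ denotes the $(p-1)$-tensor obtained by fixing the first argument to $s$. The outer product is $(\mathcal{T}_1\otimes\mathcal{T}_2)[s_1,\dots,s_{p_1+p_2}] = \mathcal{T}_1[s_1,\dots,s_{p_1}]\,\mathcal{T}_2[s_{p_1+1},\dots,s_{p_1+p_2}]$, with a vector $v$ regarded as the 1-tensor $s\mapsto v^Ts$. For $\sigma\in S_p$, $\sigma(\mathcal{T})[s_1,\dots,s_p]=\mathcal{T}[s_{\sigma(1)},\dots,s_{\sigma(p)}]$; $\mathcal{T}$ is symmetric if $\sigma(\mathcal{T})=\mathcal{T}$ for all $\sigma$, $\mathbb{R}^{\otimes^p n}_{\mathrm{sym}}$ denotes the symmetric $p$-tensors, and $P_{\mathrm{sym}}(\mathcal{T})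 = \frac{1}{p!}\sum_{\sigma\in S_p}\sigma(\mathcal{T})$. *)

theory Defs
  imports "HOL-Analysis.Analysis" "HOL-Combinatorics.Permutations" "HOL-Library.Function_Algebras"
begin

text \<open>A p-tensor on R^n (n = CARD('n)) is represented literally as a multilinear map
  (R^n)^p -> R, i.e. a function on argument lists of length p that is linear in
  each argument; by convention it is zero on lists of any other length.\<close>

type_synonym 'n tensor = "(real ^ 'n) list \<Rightarrow> real"

definition tensors :: "nat \<Rightarrow> 'n::finite tensor set" where
  "tensors p = {T. (\<forall>xs. length xs \<noteq> p \<longrightarrow> T xs = 0) \<and>
     (\<forall>xs ys. length xs + length ys + 1 = p \<longrightarrow> linear (\<lambda>x. T (xs @ [x] @ ys)))}"

definition tscale :: "real \<Rightarrow> 'n tensor \<Rightarrow> 'n tensor" where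
  "tscale c T = (\<lambda>xs. c * T xs)"

definition contract :: "'n tensor \<Rightarrow> real ^ 'n \<Rightarrow> 'n tensor" where
  "contract T s = (\<lambda>xs. T (s # xs))"

definition vec_tensor :: "real ^ 'n \<Rightarrow> 'n tensor" where
  "vec_tensor v = (\<lambda>xs. if length xs = 1 then v \<bullet> hd xs else 0)"

definition outer :: "nat \<Rightarrow> 'n tensor \<Rightarrow> 'n tensor \<Rightarrow> 'n tensor" where
  "outer p1 T1 T2 = (\<lambda>xs. T1 (take p1 xs) * T2 (drop p1 xs))"

text \<open>sigma(T)[s_1..s_p] = T[s_sigma(1)..s_sigma(p)], indices 0-based.\<close>
definition perm_tensor :: "(nat \<Rightarrow> nat) \<Rightarrow> 'n tensor \<Rightarrow> 'n tensor" where
  "perm_tensor \<sigma> T = (\<lambda>xs. T (map (\<lambda>i. xs ! \<sigma> i) [0..<length xs]))"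

definition symmetric_tensor :: "nat \<Rightarrow> 'n tensor \<Rightarrow> bool" where
  "symmetric_tensor p T \<longleftrightarrow> (\<forall>\<sigma>. \<sigma> permutes {0..<p} \<longrightarrow> perm_tensor \<sigma> T = T)"

definition sym_tensors :: "nat \<Rightarrow> 'n::finite tensor set" where
  "sym_tensors p = {T \<in> tensors p. symmetric_tensor p T}"

definition Psym :: "nat \<Rightarrow> 'n tensor \<Rightarrow> 'n tensor" where
  "Psym p T = (\<lambda>xs. (1 / fact p) * (\<Sum>\<sigma>\<in>{\<sigma>. \<sigma> permutes {0..<p}}. perm_tensor \<sigma> T xs))"

end

theory Submission
  imports Defs
begin

text \<open>Write \<open>q = p - 1\<close>. For a symmetric q-tensor \<open>A\<close> and \<open>xs = [x\<^sub>1, \<dots>, x\<^sub>q]\<close>, averaging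
  over the position of \<open>v\<close> gives
  \<open>p \<cdot> \<phi>(A)[xs] = A[xs] (v \<bullet> s) + \<Sum>\<^sub>k A[s, xs without x\<^sub>k] (v \<bullet> x\<^sub>k)\<close>.
  If \<open>\<phi>(A) = 0\<close>, evaluate this at \<open>xs = s, \<dots>, s, y\<^sub>1, \<dots>, y\<^sub>m\<close> with \<open>a\<close> leading copies of \<open>s\<close>:
  the first \<open>a\<close> summands reproduce \<open>A[xs] (v \<bullet> s)\<close>, and all others evaluate \<open>A\<close> at lists with
  \<open>a + 1\<close> copies of \<open>s\<close>. Hence \<open>(a + 1)(v \<bullet> s) A[xs]\<close> is determined by values of \<open>A\<close> with more
  copies of \<open>s\<close>, and induction on \<open>m\<close> gives \<open>A = 0\<close>. So \<open>\<phi>\<close> is an injective linear endomorphism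
  of the finite-dimensional space of symmetric q-tensors, hence bijective; since \<open>\<phi>\<close> factors
  through \<open>A \<mapsto> P\<^sub>s\<^sub>y\<^sub>m(A \<otimes> v)\<close>, that map is injective as well and preserves dimension.\<close>

lemma tscale_apply [simp]: "tscale c T xs = c * T xs"
  by (simp add: tscale_def)

interpretation tensor_space: vector_space tscale
  by unfold_locales (auto simp: tscale_def fun_eq_iff algebra_simps)

lemma tensor_linearI:
  assumes "\<And>A B. f (A + B) = f A + f B" and "\<And>c A. f (tscale c A) = tscale c (f A)"
  shows "Vector_Spaces.linear tscale tscale f"
  using assms by unfold_locales auto

subsection \<open>Injective linear maps on finite-dimensional subspaces\<close>

context vector_space
begin

lemma dim_image_eq_if_inj_on_span:
  assumes "Vector_Spaces.linear scale scale f" and "inj_on f (span S)"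
  shows "dim (f ` S) = dim S"
proof -
  interpret f: Vector_Spaces.linear scale scale f by fact
  obtain B where B: "B \<subseteq> S" "independent B" "S \<subseteq> span B" "card B = dim S"
    by (rule basis_exists)
  have "span S \<subseteq> span B"
    using B(3) by (simp add: span_minimal)
  then have span_B: "span B = span S"
    using span_mono[OF B(1)] by (rule subset_antisym[rotated])
  have inj_B: "inj_on f (span B)"
    using assms(2) span_B by simp
  have "dim (f ` S) = dim (f ` B)"
    by (rule span_eq_dim) (simp add: f.span_image span_B)
  also have "\<dots> = card (f ` B)"
    using inj_B f.independent_injective_image[OF B(2)] by (intro dim_eq_card_independent)
  also have "\<dots> = card B"
    by (rule card_image) (rule inj_on_subset[OF inj_B span_superset])
  finally show ?thesis
    using B(4) by simp
qed

lemma subset_span_if_dim_le: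
  assumes "U \<subseteq> span V" and "V \<subseteq> span W" and "finite W" and "dim V \<le> dim U"
  shows "V \<subseteq> span U"
proof -
  obtain C where C: "C \<subseteq> V" "independent C" "V \<subseteq> span C" "card C = dim V"
    by (rule basis_exists)
  obtain B where B: "B \<subseteq> U" "independent B" "U \<subseteq> span B" "card B = dim U"
    by (rule basis_exists)
  have "C \<subseteq> span W"
    using C(1) assms(2) by (rule subset_trans)
  then have finite_C: "finite C"
    using independent_span_bound[OF assms(3) C(2)] by simp
  have "span V \<subseteq> span C"
    by (rule span_minimal[OF C(3) subspace_span])
  then have B_C: "B \<subseteq> span C"
    using B(1) assms(1) by blast
  have "V \<subseteq> span B"
  proof
    fix a assume a: "a \<in> V"
    show "a \<in> span B"
    proof (rule ccontr)
      assume a_B: "a \<notin> span B"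
      have "insert a B \<subseteq> span C"
        using a C(3) B_C by (intro insert_subsetI) auto
      then have bound: "finite (insert a B) \<and> card (insert a B) \<le> card C"
        by (rule independent_span_bound[OF finite_C independent_insertI[OF a_B B(2)]])
      have "a \<notin> B"
        using a_B span_base by blast
      then have "card (insert a B) = Suc (card B)"
        using bound by simp
      then show False
        using bound B(4) C(4) assms(4) by linarith
    qed
  qed
  moreover have "span B \<subseteq> span U"
    by (rule span_mono[OF B(1)])
  ultimately show ?thesis
    by (rule subset_trans)
qed

lemma linear_inj_on_imp_surj_on:
  assumes "Vector_Spaces.linear scale scale f" and "subspace V"
    and "V \<subseteq> span W" and "finite W" and "f ` V \<subseteq> V" and "inj_on f V"
  shows "f ` V = V"
proof -
  interpret f: Vector_Spaces.linear scale scale f by fact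
  have span_V: "span V = V"
    using assms(2) by simp
  have dim: "dim (f ` V) = dim V"
    using dim_image_eq_if_inj_on_span[OF assms(1), of V] assms(6) unfolding span_V .
  have "f ` V \<subseteq> span V"
    using assms(5) span_superset by blast
  then have "V \<subseteq> span (f ` V)"
    by (rule subset_span_if_dim_le[OF _ assms(3,4)]) (simp add: dim)
  then show ?thesis
    using assms(5) by (simp add: f.span_image span_V)
qed

end

subsection \<open>Symmetric tensors\<close>

lemma perm_tensor_apply: "perm_tensor \<sigma> T xs = T (permute_list \<sigma> xs)"
  by (simp add: perm_tensor_def permute_list_def)

lemma tensors_vanish: "T \<in> tensors q \<Longrightarrow> length xs \<noteq> q \<Longrightarrow> T xs = 0"
  by (simp add: tensors_def)

lemma tensors_linear_slot:
  "T \<in> tensors q \<Longrightarrow> length as + length bs + 1 = q \<Longrightarrow> linear (\<lambda>x. T (as @ [x] @ bs))"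
  by (simp add: tensors_def)

lemma symmetric_tensor_mset_eq:
  assumes "symmetric_tensor q T" and "length ys = q" and "mset xs = mset ys"
  shows "T xs = T ys"
proof -
  obtain \<sigma> where \<sigma>: "\<sigma> permutes {..<length ys}" "permute_list \<sigma> ys = xs"
    using mset_eq_permutation[OF assms(3)] .
  have "perm_tensor \<sigma> T ys = T ys"
    using assms(1,2) \<sigma>(1) by (simp add: symmetric_tensor_def atLeast0LessThan)
  then show ?thesis
    using \<sigma>(2) by (simp add: perm_tensor_apply)
qed

lemma symmetric_tensorI_mset:
  assumes "\<And>xs ys. length ys = q \<Longrightarrow> mset xs = mset ys \<Longrightarrow> T xs = T ys"
    and "\<And>xs. length xs \<noteq> q \<Longrightarrow> T xs = 0"
  shows "symmetric_tensor q T"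
  unfolding symmetric_tensor_def
proof (intro allI impI ext)
  fix \<sigma> xs
  assume \<sigma>: "\<sigma> permutes {0..<q}"
  show "perm_tensor \<sigma> T xs = T xs"
  proof (cases "length xs = q")
    case True
    have "mset (permute_list \<sigma> xs) = mset xs"
      using \<sigma> True by (simp add: atLeast0LessThan)
    then show ?thesis
      unfolding perm_tensor_apply by (rule assms(1)[OF True])
  next
    case False
    then show ?thesis
      using assms(2) by (simp add: perm_tensor_apply)
  qed
qed

lemma tensorsI_symmetric:
  fixes T :: "'n::finite tensor"
  assumes "symmetric_tensor q T" and "\<And>xs. length xs \<noteq> q \<Longrightarrow> T xs = 0"
    and "\<And>r. length r + 1 = q \<Longrightarrow> linear (\<lambda>x. T (x # r))"
  shows "T \<in> tensors q"
  unfolding tensors_def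
proof (intro CollectI conjI allI impI)
  fix as bs :: "(real ^ 'n) list"
  assume len: "length as + length bs + 1 = q"
  have "T (as @ [x] @ bs) = T (x # (as @ bs))" for x
    using len by (intro symmetric_tensor_mset_eq[OF assms(1)]) simp_all
  then show "linear (\<lambda>x. T (as @ [x] @ bs))"
    using assms(3)[of "as @ bs"] len by simp
qed (use assms(2) in blast)

lemma linear_const_mult: "linear f \<Longrightarrow> linear (\<lambda>x. c * f x :: real)"
  using real_vector.linear_compose_scale_right[of f c] by simp

lemma subspace_sym_tensors: "tensor_space.subspace (sym_tensors q)"
  unfolding tensor_space.subspace_def sym_tensors_def tensors_def symmetric_tensor_def
  by (auto simp: perm_tensor_def fun_eq_iff intro!: real_vector.linear_compose_add
      linear_const_mult real_vector.linear_zero)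

lemma Psym_mset_eq:
  assumes "length ys = p" and "mset xs = mset ys"
  shows "Psym p T xs = Psym p T ys"
proof -
  obtain \<tau> where \<tau>: "\<tau> permutes {..<p}" "permute_list \<tau> ys = xs"
    using mset_eq_permutation[OF assms(2)] assms(1) by blast
  have \<tau>': "\<tau> permutes {0..<p}"
    using \<tau>(1) by (simp add: atLeast0LessThan)
  have "(\<Sum>\<sigma>\<in>{\<sigma>. \<sigma> permutes {0..<p}}. perm_tensor \<sigma> T xs)
      = (\<Sum>\<sigma>\<in>{\<sigma>. \<sigma> permutes {0..<p}}. perm_tensor (\<tau> \<circ> \<sigma>) T ys)"
    using \<tau> assms(1) by (intro sum.cong refl)
      (simp add: perm_tensor_apply permute_list_compose atLeast0LessThan)
  also have "\<dots> = (\<Sum>\<sigma>\<in>{\<sigma>. \<sigma> permutes {0..<p}}. perm_tensor \<sigma> T ys)"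
    by (rule setum_permutations_compose_left[OF \<tau>', symmetric])
  finally show ?thesis
    by (simp add: Psym_def)
qed

subsection \<open>Finite dimensionality\<close>

fun elementary_tensors :: "nat \<Rightarrow> 'n::finite tensor set" where
  "elementary_tensors 0 = {\<lambda>xs. if xs = [] then 1 else 0}"
| "elementary_tensors (Suc q) = (\<Union>b\<in>Basis. outer 1 (vec_tensor b) ` elementary_tensors q)"

lemma finite_elementary_tensors: "finite (elementary_tensors q)"
  by (induction q) auto

lemma sum_fun_apply: "(\<Sum>i\<in>I. f i) x = (\<Sum>i\<in>I. f i x)"
  by (induction I rule: infinite_finite_induct) auto

lemma linear_outer_vec_tensor: "Vector_Spaces.linear tscale tscale (outer 1 (vec_tensor b))"
  by (rule tensor_linearI) (auto simp: outer_def fun_eq_iff algebra_simps)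

lemma contract_in_tensors:
  fixes T :: "'n::finite tensor"
  assumes "T \<in> tensors (Suc q)"
  shows "contract T b \<in> tensors q"
  unfolding tensors_def contract_def
proof (intro CollectI conjI allI impI)
  fix xs :: "(real ^ 'n) list"
  assume "length xs \<noteq> q"
  then show "T (b # xs) = 0"
    using tensors_vanish[OF assms] by simp
next
  fix as bs :: "(real ^ 'n) list"
  assume "length as + length bs + 1 = q"
  then show "linear (\<lambda>x. T (b # as @ [x] @ bs))"
    using tensors_linear_slot[OF assms, of "b # as" bs] by simp
qed

lemma tensor_expansion_first:
  assumes "T \<in> tensors (Suc q)"
  shows "T = (\<Sum>b\<in>Basis. outer 1 (vec_tensor b) (contract T b))"
proof
  fix xs
  show "T xs = (\<Sum>b\<in>Basis. outer 1 (vec_tensor b) (contract T b)) xs"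
  proof (cases xs)
    case Nil
    then show ?thesis
      using tensors_vanish[OF assms] by (simp add: sum_fun_apply outer_def vec_tensor_def)
  next
    case (Cons x r)
    show ?thesis
    proof (cases "length r = q")
      case False
      then show ?thesis
        using tensors_vanish[OF assms] Cons by (simp add: sum_fun_apply outer_def contract_def)
    next
      case True
      have lin: "linear (\<lambda>x. T (x # r))"
        using tensors_linear_slot[OF assms, of "[]" r] True by simp
      have "T (x # r) = T ((\<Sum>b\<in>Basis. (x \<bullet> b) *\<^sub>R b) # r)"
        by (simp add: euclidean_representation)
      also have "\<dots> = (\<Sum>b\<in>Basis. T (((x \<bullet> b) *\<^sub>R b) # r))"
        using real_vector.linear_sum[OF lin, of "\<lambda>b. (x \<bullet> b) *\<^sub>R b" Basis] by (simp add: o_def)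
      also have "\<dots> = (\<Sum>b\<in>Basis. (x \<bullet> b) * T (b # r))"
        using linear_cmul[OF lin] by simp
      finally show ?thesis
        using Cons by (simp add: sum_fun_apply outer_def vec_tensor_def contract_def inner_commute)
    qed
  qed
qed

lemma tensors_subset_span: "tensors q \<subseteq> tensor_space.span (elementary_tensors q)"
proof (induction q)
  case 0
  have "T = tscale (T []) (\<lambda>xs. if xs = [] then 1 else 0)" if "T \<in> tensors 0" for T
    using tensors_vanish[OF that] by (auto simp: fun_eq_iff)
  then show ?case
    by (metis elementary_tensors.simps(1) singletonI subsetI tensor_space.span_base
        tensor_space.span_scale)
next
  case (Suc q)
  show ?case
  proof
    fix T :: "'a tensor"
    assume T: "T \<in> tensors (Suc q)"
    have "outer 1 (vec_tensor b) (contract T b) \<in> tensor_space.span (elementary_tensors (Suc q))"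
      if "b \<in> Basis" for b
    proof -
      interpret outer_b: Vector_Spaces.linear tscale tscale "outer 1 (vec_tensor b)"
        by (rule linear_outer_vec_tensor)
      have "outer 1 (vec_tensor b) (contract T b)
          \<in> outer 1 (vec_tensor b) ` tensor_space.span (elementary_tensors q)"
        using Suc.IH contract_in_tensors[OF T] by blast
      also have "\<dots> = tensor_space.span (outer 1 (vec_tensor b) ` elementary_tensors q)"
        by (rule outer_b.span_image[symmetric])
      also have "\<dots> \<subseteq> tensor_space.span (elementary_tensors (Suc q))"
        using that by (intro tensor_space.span_mono) auto
      finally show ?thesis .
    qed
    then show "T \<in> tensor_space.span (elementary_tensors (Suc q))"
      by (subst tensor_expansion_first[OF T]) (rule tensor_space.span_sum)
  qed
qed

subsection \<open>The symmetrised product with a vector\<close>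

fun remove_nth :: "nat \<Rightarrow> 'a list \<Rightarrow> 'a list" where
  "remove_nth _ [] = []"
| "remove_nth 0 (x # xs) = xs"
| "remove_nth (Suc k) (x # xs) = x # remove_nth k xs"

lemma length_remove_nth: "j < length xs \<Longrightarrow> length (remove_nth j xs) = length xs - 1"
  by (induction j xs rule: remove_nth.induct) auto

lemma mset_remove_nth: "j < length xs \<Longrightarrow> mset (remove_nth j xs) = mset xs - {#xs ! j#}"
  by (induction j xs rule: remove_nth.induct) auto

lemma remove_nth_append_left:
  "k < length xs \<Longrightarrow> remove_nth k (xs @ ys) = remove_nth k xs @ ys"
  by (induction k xs rule: remove_nth.induct) auto

lemma remove_nth_append_right: "remove_nth (length xs + k) (xs @ ys) = xs @ remove_nth k ys"
  by (induction xs) auto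

lemma remove_nth_replicate: "k < a \<Longrightarrow> remove_nth k (replicate a x) = replicate (a - 1) x"
proof (induction k arbitrary: a)
  case 0
  then show ?case by (cases a) auto
next
  case (Suc k)
  then obtain n where "a = Suc n" and "k < n"
    by (cases a) auto
  with Suc.IH[of n] show ?case
    by (cases n) auto
qed

lemma card_permutations_with_value:
  assumes "j \<le> q"
  shows "card {\<sigma>. \<sigma> permutes {0..<Suc q} \<and> \<sigma> q = j} = fact q"
proof -
  let ?t = "Transposition.transpose j q"
  have t: "?t permutes {0..<Suc q}"
    using assms by (intro permutes_swap_id) auto
  have "bij_betw ((\<circ>) ?t) {\<tau>. \<tau> permutes {0..<q}} {\<sigma>. \<sigma> permutes {0..<Suc q} \<and> \<sigma> q = j}"
  proof (rule bij_betw_byWitness[where f' = "(\<circ>) ?t"])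
    show "(\<circ>) ?t ` {\<tau>. \<tau> permutes {0..<q}} \<subseteq> {\<sigma>. \<sigma> permutes {0..<Suc q} \<and> \<sigma> q = j}"
    proof clarsimp
      fix \<tau> assume \<tau>: "\<tau> permutes {0..<q}"
      then have "\<tau> permutes {0..<Suc q}"
        by (rule permutes_subset) auto
      then show "?t \<circ> \<tau> permutes {0..<Suc q} \<and> ?t (\<tau> q) = j"
        using permutes_compose[OF _ t] permutes_not_in[OF \<tau>, of q] by auto
    qed
    show "(\<circ>) ?t ` {\<sigma>. \<sigma> permutes {0..<Suc q} \<and> \<sigma> q = j} \<subseteq> {\<tau>. \<tau> permutes {0..<q}}"
    proof clarsimp
      fix \<sigma> assume \<sigma>: "\<sigma> permutes {0..<Suc q}" and "j = \<sigma> q"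
      then have "Transposition.transpose (\<sigma> q) q \<circ> \<sigma> permutes {0..<Suc q}"
        using permutes_compose[OF \<sigma> t] by simp
      then show "Transposition.transpose (\<sigma> q) q \<circ> \<sigma> permutes {0..<q}"
        by (rule permutes_superset) (simp add: transpose_apply_second)
    qed
  qed (auto simp: fun_eq_iff)
  then show ?thesis
    using card_permutations[of "{0..<q}" q] by (simp add: bij_betw_same_card)
qed

lemma sum_permutations_by_value:
  fixes h :: "nat \<Rightarrow> real"
  shows "(\<Sum>\<sigma>\<in>{\<sigma>. \<sigma> permutes {0..<Suc q}}. h (\<sigma> q)) = fact q * (\<Sum>j<Suc q. h j)"
proof -
  let ?P = "{\<sigma>. \<sigma> permutes {0..<Suc q}}"
  have "finite ?P"
    by (rule finite_permutations) simp
  moreover have "\<sigma> q \<in> {..<Suc q}" if "\<sigma> \<in> ?P" for \<sigma>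
    using permutes_in_image[of \<sigma> "{0..<Suc q}" q] that by auto
  ultimately have "(\<Sum>\<sigma>\<in>?P. h (\<sigma> q)) = (\<Sum>j<Suc q. \<Sum>\<sigma>\<in>{\<sigma>. \<sigma> \<in> ?P \<and> \<sigma> q = j}. h (\<sigma> q))"
    by (intro sum.group[symmetric]) auto
  also have "\<dots> = (\<Sum>j<Suc q. fact q * h j)"
    by (intro sum.cong refl) (simp add: card_permutations_with_value)
  finally show ?thesis
    by (simp only: sum_distrib_left)
qed

definition sym_outer :: "nat \<Rightarrow> 'n tensor \<Rightarrow> real ^ 'n \<Rightarrow> 'n tensor" where
  "sym_outer q A v = Psym (Suc q) (outer q A (vec_tensor v))"

lemma sym_outer_apply:
  assumes "symmetric_tensor q A" and "length ys = Suc q"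
  shows "sym_outer q A v ys = (\<Sum>j<Suc q. A (remove_nth j ys) * (v \<bullet> ys ! j)) / (Suc q)"
proof -
  have summand: "perm_tensor \<sigma> (outer q A (vec_tensor v)) ys = A (remove_nth (\<sigma> q) ys) * (v \<bullet> ys ! \<sigma> q)"
    if \<sigma>: "\<sigma> permutes {0..<Suc q}" for \<sigma>
  proof -
    let ?zs = "permute_list \<sigma> ys"
    have \<sigma>': "\<sigma> permutes {..<length ys}"
      using \<sigma> assms(2) by (simp add: atLeast0LessThan)
    have \<sigma>q: "\<sigma> q < Suc q"
      using permutes_in_image[OF \<sigma>, of q] by simp
    have drop: "drop q ?zs = [ys ! \<sigma> q]"
      using assms(2) \<sigma>' by (simp add: permute_list_def drop_map)
    have "mset (take q ?zs) + {#ys ! \<sigma> q#} = mset ys"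
      using arg_cong[OF append_take_drop_id[of q ?zs], of mset] \<sigma>' drop by simp
    then have "mset (take q ?zs) = mset ys - {#ys ! \<sigma> q#}"
      by (metis add_mset_add_single add_mset_remove_trivial)
    then have "mset (take q ?zs) = mset (remove_nth (\<sigma> q) ys)"
      using \<sigma>q assms(2) by (simp add: mset_remove_nth)
    then have "A (take q ?zs) = A (remove_nth (\<sigma> q) ys)"
      using \<sigma>q assms by (intro symmetric_tensor_mset_eq) (simp_all add: length_remove_nth)
    then show ?thesis
      using drop assms(2) by (simp add: perm_tensor_apply outer_def vec_tensor_def)
  qed
  have "sym_outer q A v ys = (\<Sum>\<sigma>\<in>{\<sigma>. \<sigma> permutes {0..<Suc q}}.
      A (remove_nth (\<sigma> q) ys) * (v \<bullet> ys ! \<sigma> q)) / fact (Suc q)"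
    unfolding sym_outer_def Psym_def by (simp add: summand)
  also have "\<dots> = (\<Sum>j<Suc q. A (remove_nth j ys) * (v \<bullet> ys ! j)) / (Suc q)"
    unfolding sum_permutations_by_value[of "\<lambda>j. A (remove_nth j ys) * (v \<bullet> ys ! j)"]
    by (simp add: fact_Suc)
  finally show ?thesis .
qed

lemma contract_sym_outer_apply:
  assumes "symmetric_tensor q A" and "length xs = q"
  shows "contract (sym_outer q A v) s xs
    = (A xs * (v \<bullet> s) + (\<Sum>k<q. A (s # remove_nth k xs) * (v \<bullet> xs ! k))) / (Suc q)"
proof -
  have "contract (sym_outer q A v) s xs
      = (\<Sum>j<Suc q. A (remove_nth j (s # xs)) * (v \<bullet> (s # xs) ! j)) / Suc q"
    unfolding contract_def using assms by (intro sym_outer_apply) auto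
  then show ?thesis
    by (simp only: sum.lessThan_Suc_shift) simp
qed

lemma linear_sym_outer: "Vector_Spaces.linear tscale tscale (\<lambda>A. sym_outer q A v)"
  by (rule tensor_linearI)
    (simp_all add: fun_eq_iff sym_outer_def Psym_def perm_tensor_def outer_def
      sum.distrib sum_distrib_left algebra_simps)

lemma linear_contract: "Vector_Spaces.linear tscale tscale (\<lambda>T. contract T s)"
  by (rule tensor_linearI) (simp_all add: fun_eq_iff contract_def)

lemma contract_sym_outer_vanish:
  assumes "length xs \<noteq> q"
  shows "contract (sym_outer q A v) s xs = 0"
proof -
  have "Suc (length xs) - q \<noteq> 1"
    using assms by arith
  then show ?thesis
    by (simp add: sym_outer_def contract_def Psym_def perm_tensor_def outer_def vec_tensor_def)
qed

lemma symmetric_contract_sym_outer: "symmetric_tensor q (contract (sym_outer q A v) s)"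
proof (rule symmetric_tensorI_mset)
  fix xs ys :: "(real ^ 'a) list"
  assume "length ys = q" and "mset xs = mset ys"
  then show "contract (sym_outer q A v) s xs = contract (sym_outer q A v) s ys"
    unfolding contract_def sym_outer_def by (intro Psym_mset_eq) simp_all
qed (rule contract_sym_outer_vanish)

lemma linear_first_contract_sym_outer:
  assumes "A \<in> sym_tensors q" and "length r + 1 = q"
  shows "linear (\<lambda>x. contract (sym_outer q A v) s (x # r))"
proof -
  have A: "symmetric_tensor q A" "A \<in> tensors q"
    using assms(1) by (simp_all add: sym_tensors_def)
  have "contract (sym_outer q A v) s (x # r) = inverse (Suc q) * ((v \<bullet> s) * A (x # r)
      + A (s # r) * (v \<bullet> x) + (\<Sum>k<length r. (v \<bullet> r ! k) * A (s # x # remove_nth k r)))" for x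
  proof -
    have "contract (sym_outer q A v) s (x # r) = ((v \<bullet> s) * A (x # r)
        + (\<Sum>k<Suc (length r). (v \<bullet> (x # r) ! k) * A (s # remove_nth k (x # r)))) / Suc q"
      using contract_sym_outer_apply[OF A(1), of "x # r"] assms(2) by (simp add: mult.commute)
    then show ?thesis
      by (simp only: sum.lessThan_Suc_shift) (simp add: field_simps)
  qed
  moreover have "linear (\<lambda>x. A (x # r))" "\<And>k. k < length r \<Longrightarrow> linear (\<lambda>x. A (s # x # remove_nth k r))"
    using tensors_linear_slot[OF A(2), of "[]" r] tensors_linear_slot[OF A(2), of "[s]"] assms(2)
    by (simp_all add: length_remove_nth)
  ultimately show ?thesis
    by (simp only:)
      (intro linear_const_mult real_vector.linear_compose_add real_vector.linear_compose_sum
        bounded_linear_inner_right[THEN bounded_linear.linear] ballI; simp)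
qed

lemma contract_sym_outer_in_sym_tensors:
  assumes "A \<in> sym_tensors q"
  shows "contract (sym_outer q A v) s \<in> sym_tensors q"
proof -
  have "contract (sym_outer q A v) s \<in> tensors q"
    by (rule tensorsI_symmetric[OF symmetric_contract_sym_outer contract_sym_outer_vanish
          linear_first_contract_sym_outer[OF assms]])
  then show ?thesis
    using symmetric_contract_sym_outer by (simp add: sym_tensors_def)
qed

lemma contract_sym_outer_eq_0_step:
  assumes A: "A \<in> sym_tensors q" and vs: "v \<bullet> s \<noteq> 0" and \<phi>A: "contract (sym_outer q A v) s = 0"
    and len: "a + length ys = q"
    and more_s: "\<And>k. k < length ys \<Longrightarrow> A (replicate (Suc a) s @ remove_nth k ys) = 0"
  shows "A (replicate a s @ ys) = 0"
proof -
  define xs where "xs = replicate a s @ ys"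
  have sym: "symmetric_tensor q A"
    using A by (simp add: sym_tensors_def)
  have split: "(\<Sum>k<a + m. f k) = (\<Sum>k<a. f k) + (\<Sum>k<m. f (a + k))" for f :: "nat \<Rightarrow> real" and m
    by (induction m) (simp_all add: add.assoc)
  have leading: "A (s # remove_nth k xs) * (v \<bullet> xs ! k) = A xs * (v \<bullet> s)" if "k < a" for k
  proof -
    have "s # remove_nth k xs = s # replicate (a - 1) s @ ys"
      using that remove_nth_append_left[of k "replicate a s" ys] remove_nth_replicate[of k a s]
      by (simp add: xs_def)
    also have "\<dots> = xs"
      using that by (cases a) (simp_all add: xs_def)
    finally have "s # remove_nth k xs = xs" .
    moreover have "xs ! k = s"
      using that by (simp add: xs_def nth_append)
    ultimately show ?thesis
      by simp
  qed
  have trailing: "A (s # remove_nth (a + k) xs) = 0" if "k < length ys" for k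
    using more_s[OF that] remove_nth_append_right[of "replicate a s" k ys] by (simp add: xs_def)
  have "0 = contract (sym_outer q A v) s xs"
    using \<phi>A by simp
  also have "\<dots> = (A xs * (v \<bullet> s) + (\<Sum>k<q. A (s # remove_nth k xs) * (v \<bullet> xs ! k))) / Suc q"
    using len by (intro contract_sym_outer_apply[OF sym]) (simp add: xs_def)
  also have "\<dots> = (1 + a) * (v \<bullet> s) * A xs / Suc q"
    unfolding len[symmetric] split using leading trailing by (simp add: algebra_simps)
  finally show ?thesis
    using vs by (simp add: xs_def)
qed

lemma contract_sym_outer_eq_0_imp:
  assumes A: "A \<in> sym_tensors q" and vs: "v \<bullet> s \<noteq> 0" and \<phi>A: "contract (sym_outer q A v) s = 0"
  shows "A = 0"
proof -
  have vanish: "A (replicate (q - length ys) s @ ys) = 0" if "length ys \<le> q" for ys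
    using that
  proof (induction "length ys" arbitrary: ys)
    case 0
    show ?case
      by (rule contract_sym_outer_eq_0_step[OF A vs \<phi>A]) (use 0 in simp_all)
  next
    case (Suc m)
    have more_s: "A (replicate (Suc (q - length ys)) s @ remove_nth k ys) = 0" if "k < length ys" for k
    proof -
      have "length (remove_nth k ys) = m" and "Suc (q - length ys) = q - m"
        using Suc.hyps(2) Suc.prems that by (simp_all add: length_remove_nth)
      then show ?thesis
        using Suc.hyps(1)[of "remove_nth k ys"] Suc.prems by simp
    qed
    show ?case
      by (rule contract_sym_outer_eq_0_step[OF A vs \<phi>A]) (use Suc.prems more_s in simp_all)
  qed
  show "A = 0"
  proof
    fix xs
    show "A xs = 0 xs"
    proof (cases "length xs = q")
      case True
      then show ?thesis
        using vanish[of xs] by simp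
    next
      case False
      then show ?thesis
        using A tensors_vanish[of A q xs] by (simp add: sym_tensors_def)
    qed
  qed
qed

lemma linear_contract_sym_outer:
  "Vector_Spaces.linear tscale tscale (\<lambda>A. contract (sym_outer q A v) s)"
  using Vector_Spaces.linear_compose[OF linear_sym_outer linear_contract] by (simp add: o_def)

lemma inj_on_contract_sym_outer:
  assumes "v \<bullet> s \<noteq> 0"
  shows "inj_on (\<lambda>A. contract (sym_outer q A v) s) (sym_tensors q)"
proof -
  interpret \<phi>: Vector_Spaces.linear tscale tscale "\<lambda>A. contract (sym_outer q A v) s"
    by (rule linear_contract_sym_outer)
  show ?thesis
    unfolding \<phi>.inj_on_iff_eq_0[OF subspace_sym_tensors]
    using contract_sym_outer_eq_0_imp[OF _ assms] by blast
qed

lemma bij_betw_contract_sym_outer: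
  assumes "v \<bullet> s \<noteq> 0"
  shows "bij_betw (\<lambda>A. contract (sym_outer q A v) s) (sym_tensors q) (sym_tensors q)"
proof -
  have "sym_tensors q \<subseteq> tensor_space.span (elementary_tensors q)"
    using tensors_subset_span by (auto simp: sym_tensors_def)
  moreover have "(\<lambda>A. contract (sym_outer q A v) s) ` sym_tensors q \<subseteq> sym_tensors q"
    using contract_sym_outer_in_sym_tensors by blast
  ultimately have "(\<lambda>A. contract (sym_outer q A v) s) ` sym_tensors q = sym_tensors q"
    using inj_on_contract_sym_outer[OF assms] finite_elementary_tensors
    by (intro tensor_space.linear_inj_on_imp_surj_on[OF linear_contract_sym_outer
          subspace_sym_tensors])
  then show ?thesis
    using inj_on_contract_sym_outer[OF assms] by (simp add: bij_betw_def)
qed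

lemma dim_image_sym_outer:
  fixes v s :: "real ^ 'n::finite"
  assumes "v \<bullet> s \<noteq> 0"
  shows "tensor_space.dim ((\<lambda>A. sym_outer q A v) ` sym_tensors q)
    = tensor_space.dim (sym_tensors q :: 'n tensor set)"
proof -
  have span: "tensor_space.span (sym_tensors q) = sym_tensors q"
    by (rule tensor_space.span_eq_iff[THEN iffD2, OF subspace_sym_tensors])
  have "inj_on (\<lambda>A. sym_outer q A v) (tensor_space.span (sym_tensors q))"
    unfolding span using inj_on_imageI2[of "\<lambda>T. contract T s" "\<lambda>A. sym_outer q A v"]
      inj_on_contract_sym_outer[OF assms] by (simp add: o_def)
  then show ?thesis
    by (rule tensor_space.dim_image_eq_if_inj_on_span[OF linear_sym_outer])
qed

theorem mainTheorem3:
  fixes p :: nat and v s :: "real ^ 'n::finite"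
  assumes "p \<ge> 2" and "v \<bullet> s \<noteq> 0"
  defines "\<phi> \<equiv> (\<lambda>A. contract (Psym p (outer (p - 1) A (vec_tensor v))) s)"
  shows "Vector_Spaces.linear tscale tscale \<phi>
    \<and> bij_betw \<phi> (sym_tensors (p - 1)) (sym_tensors (p - 1))
    \<and> vector_space.dim tscale {Psym p (outer (p - 1) A (vec_tensor v)) | A. A \<in> sym_tensors (p - 1)}
        = vector_space.dim tscale (sym_tensors (p - 1) :: 'n tensor set)"
proof -
  obtain q where p: "p = Suc q"
    using assms(1) by (cases p) auto
  have \<phi>: "\<phi> = (\<lambda>A. contract (sym_outer q A v) s)"
    by (simp add: \<phi>_def sym_outer_def p)
  have "{Psym p (outer (p - 1) A (vec_tensor v)) | A. A \<in> sym_tensors (p - 1)}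
      = (\<lambda>A. sym_outer q A v) ` sym_tensors q"
    by (auto simp: sym_outer_def p)
  then show ?thesis
    unfolding \<phi> using linear_contract_sym_outer[of q v s] bij_betw_contract_sym_outer[OF assms(2)]
      dim_image_sym_outer[OF assms(2), of q] by (simp add: p)
qed

end
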